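(* Let $\Bbbk$ be a field, $R=\Bbbk[x_1,\dots,x_m]$ with the standard $\mathbb Z^m$-grading, $M$ a finitely generated torsion-free $\mathbb Z^m$-graded $R$-module, and $\mathcal F_\bullet$ a minimal $\mathbb Z^m$-graded free resolution of $M$ with differentials $f_n$ (and $f_0\colon F_0\to M$ the augmentation). Let $B$ be a homogeneous basis of $\mathcal F_\bullet$ with minimal support. If $n\ge1$ and $y\in F_n$ is a homogeneous element with $\operatorname{supp}f_n(y)=\operatorname{supp}f_n(b)$ for some $b\in B_n$, then there is a nonzero homogeneous $a\in R$ with $a f_n(b)=f_n(y)$. In particular, any two distinct elements of $B_n$ ($n\ge1$) have non-comparable (with respect to inclusion) boundary supports.
   Context: For a complex of free modules $\mathcal F_\bullet$ with differentials $f_n$, $f_0\colon F_0\to H_0(\mathcal F_\bullet)$ the canonical projection, and bases $B_n$ of $F_n$, $B=\coprod B_n$: the support of $y=\sum_{c\in B_n}a_cc$ is $\{c\in B_n:a_c\ne0\}$; $y$ is a cycle with minimal support if $y\in\operatorname{Ker}f_n$ and $\operatorname{supp}y$ does not properly contain the support of any nonzero element of $\operatorname{Ker}f_n$; the boundary support of $y\in F_n$ ($n\ge1$) is $\operatorname{supp}f_n(y)$; $B$ is a basis with minimal support if $f_n(b)$ is a cycle with minimal support for all $n\ge1$, $b\in B_n$. A $\mathbb Z^m$-graded free resolution is minimal if its differentials are homogeneous of degree $0$ and $f_n(F_n)\subseteq(x_1,\dots,x_m)F_{n-1}$ for $n\ge1$. *)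

theory Defs
  imports "HOL-Library.Poly_Mapping"
begin

text \<open>The polynomial ring R = k[x_v : v in 'v] (with 'v a finite type, m = CARD('v)):
  polynomials are finitely supported maps from monomials (exponent vectors) to coefficients.\<close>
type_synonym ('v, 'k) mpoly = "('v \<Rightarrow>\<^sub>0 nat) \<Rightarrow>\<^sub>0 'k"

definition Var :: "'v \<Rightarrow> ('v, 'k::comm_ring_1) mpoly" where
  "Var i = Poly_Mapping.single (Poly_Mapping.single i 1) 1"

definition var_ideal :: "('v::finite, 'k::comm_ring_1) mpoly set" where
  "var_ideal = {p. \<exists>q. p = (\<Sum>i\<in>UNIV. q i * Var i)}"

definition mon_deg :: "('v \<Rightarrow>\<^sub>0 nat) \<Rightarrow> ('v \<Rightarrow> int)" where
  "mon_deg \<mu> = (\<lambda>i. int (Poly_Mapping.lookup \<mu> i))"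

definition homog_poly :: "('v, 'k::zero) mpoly \<Rightarrow> bool" where
  "homog_poly p \<longleftrightarrow> (\<exists>\<alpha>. \<forall>\<mu>\<in>Poly_Mapping.keys p. mon_deg \<mu> = \<alpha>)"

text \<open>The free module F_n is modelled as the finitely supported vectors
  finitely supported maps from 'b to R whose support lies in the basis B n; basis element c is the unit vector at c.\<close>
definition free_mod :: "(nat \<Rightarrow> 'b set) \<Rightarrow> nat \<Rightarrow> ('b \<Rightarrow>\<^sub>0 ('v, 'k::zero) mpoly) set" where
  "free_mod B n = {y. Poly_Mapping.keys y \<subseteq> B n}"

definition vsmult :: "('v, 'k::comm_ring_1) mpoly \<Rightarrow> ('b \<Rightarrow>\<^sub>0 ('v, 'k) mpoly) \<Rightarrow> ('b \<Rightarrow>\<^sub>0 ('v, 'k) mpoly)" where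
  "vsmult a y = Poly_Mapping.map (\<lambda>r. a * r) y"

definition homog_vec_deg :: "('b \<Rightarrow> ('v \<Rightarrow> int)) \<Rightarrow> ('v \<Rightarrow> int) \<Rightarrow> ('b \<Rightarrow>\<^sub>0 ('v, 'k::zero) mpoly) \<Rightarrow> bool" where
  "homog_vec_deg dg \<alpha> y \<longleftrightarrow> (\<forall>c. \<forall>\<mu>\<in>Poly_Mapping.keys (Poly_Mapping.lookup y c). (\<lambda>i. mon_deg \<mu> i + dg c i) = \<alpha>)"

definition homog_vec :: "('b \<Rightarrow> ('v \<Rightarrow> int)) \<Rightarrow> ('b \<Rightarrow>\<^sub>0 ('v, 'k::zero) mpoly) \<Rightarrow> bool" where
  "homog_vec dg y \<longleftrightarrow> (\<exists>\<alpha>. homog_vec_deg dg \<alpha> y)"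

definition dmap :: "(nat \<Rightarrow> 'b \<Rightarrow> ('b \<Rightarrow>\<^sub>0 ('v, 'k::comm_ring_1) mpoly)) \<Rightarrow> nat
    \<Rightarrow> ('b \<Rightarrow>\<^sub>0 ('v, 'k) mpoly) \<Rightarrow> ('b \<Rightarrow>\<^sub>0 ('v, 'k) mpoly)" where
  "dmap d n y = (\<Sum>b\<in>Poly_Mapping.keys y. vsmult (Poly_Mapping.lookup y b) (d n b))"

text \<open>Kernel of f_k: for k \<ge> 1 the kernel of the differential, for k = 0 the kernel of the
  canonical projection F_0 \<rightarrow> H_0 = F_0 / f_1(F_1), i.e. the image of f_1.\<close>
definition ker_f :: "(nat \<Rightarrow> 'b set) \<Rightarrow> (nat \<Rightarrow> 'b \<Rightarrow> ('b \<Rightarrow>\<^sub>0 ('v, 'k::comm_ring_1) mpoly)) \<Rightarrow> nat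
    \<Rightarrow> ('b \<Rightarrow>\<^sub>0 ('v, 'k) mpoly) set" where
  "ker_f B d k = (if k = 0 then dmap d 1 ` free_mod B 1
                  else {y \<in> free_mod B k. dmap d k y = 0})"

definition cycle_min_supp :: "(nat \<Rightarrow> 'b set) \<Rightarrow> (nat \<Rightarrow> 'b \<Rightarrow> ('b \<Rightarrow>\<^sub>0 ('v, 'k::comm_ring_1) mpoly)) \<Rightarrow> nat
    \<Rightarrow> ('b \<Rightarrow>\<^sub>0 ('v, 'k) mpoly) \<Rightarrow> bool" where
  "cycle_min_supp B d k y \<longleftrightarrow> y \<in> ker_f B d k \<and>
     \<not> (\<exists>z \<in> ker_f B d k. z \<noteq> 0 \<and> Poly_Mapping.keys z \<subset> Poly_Mapping.keys y)"

text \<open>(B, deg, d) is a minimal Z^m-graded free resolution of M = F_0 / f_1(F_1).\<close>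
definition min_graded_free_res :: "(nat \<Rightarrow> 'b set) \<Rightarrow> (nat \<Rightarrow> 'b \<Rightarrow> ('v::finite \<Rightarrow> int))
    \<Rightarrow> (nat \<Rightarrow> 'b \<Rightarrow> ('b \<Rightarrow>\<^sub>0 ('v, 'k::comm_ring_1) mpoly)) \<Rightarrow> bool" where
  "min_graded_free_res B dg d \<longleftrightarrow>
     (\<forall>n\<ge>1. \<forall>b\<in>B n. d n b \<in> free_mod B (n - 1)) \<and>
     (\<forall>n\<ge>1. \<forall>b\<in>B n. homog_vec_deg (dg (n - 1)) (dg n b) (d n b)) \<and>
     (\<forall>n\<ge>1. ker_f B d n = dmap d (n + 1) ` free_mod B (n + 1)) \<and>
     (\<forall>n\<ge>1. \<forall>y\<in>free_mod B n. \<forall>c. Poly_Mapping.lookup (dmap d n y) c \<in> var_ideal)"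

definition coker_fin_gen :: "(nat \<Rightarrow> 'b set) \<Rightarrow> (nat \<Rightarrow> 'b \<Rightarrow> ('b \<Rightarrow>\<^sub>0 ('v, 'k::comm_ring_1) mpoly)) \<Rightarrow> bool" where
  "coker_fin_gen B d \<longleftrightarrow> (\<exists>G. finite G \<and> G \<subseteq> free_mod B 0 \<and>
     (\<forall>v\<in>free_mod B 0. \<exists>r w. w \<in> ker_f B d 0 \<and> v = (\<Sum>g\<in>G. vsmult (r g) g) + w))"

definition coker_torsion_free :: "(nat \<Rightarrow> 'b set) \<Rightarrow> (nat \<Rightarrow> 'b \<Rightarrow> ('b \<Rightarrow>\<^sub>0 ('v, 'k::comm_ring_1) mpoly)) \<Rightarrow> bool" where
  "coker_torsion_free B d \<longleftrightarrow> (\<forall>r v. r \<noteq> 0 \<longrightarrow> v \<in> free_mod B 0 \<longrightarrow>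
     vsmult r v \<in> ker_f B d 0 \<longrightarrow> v \<in> ker_f B d 0)"

definition basis_min_supp :: "(nat \<Rightarrow> 'b set) \<Rightarrow> (nat \<Rightarrow> 'b \<Rightarrow> ('b \<Rightarrow>\<^sub>0 ('v, 'k::comm_ring_1) mpoly)) \<Rightarrow> bool" where
  "basis_min_supp B d \<longleftrightarrow> (\<forall>n\<ge>1. \<forall>b\<in>B n. cycle_min_supp B d (n - 1) (d n b))"

end

theory Submission imports Defs begin

text \<open>For the standard \<open>\<int>\<^sup>m\<close>-grading every homogeneous polynomial is a scalar multiple of a
  monomial. Let \<open>c\<close> lie in the common boundary support of \<open>b\<close> and \<open>y\<close>, with coefficients
  \<open>p = k x\<^sup>\<mu>\<close> of \<open>f\<^sub>n(b)\<close> and \<open>q = l x\<^sup>\<nu>\<close> of \<open>f\<^sub>n(y)\<close>. The cycle \<open>p f\<^sub>n(y) - q f\<^sub>n(b)\<close> has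
  support strictly inside that of \<open>f\<^sub>n(b)\<close>, so it vanishes by minimality. If \<open>x\<^sup>\<mu>\<close> divides
  \<open>x\<^sup>\<nu>\<close> we may cancel \<open>p\<close> and are done. Otherwise some variable \<open>x\<^sub>i\<close> divides every
  coefficient of \<open>f\<^sub>n(b) = x\<^sub>i w\<close>. Torsion-freeness of \<open>M\<close> (for \<open>n = 1\<close>), resp. injectivity of
  multiplication by \<open>x\<^sub>i\<close> (for \<open>n > 1\<close>), makes \<open>w\<close> a cycle, hence a boundary \<open>f\<^sub>n(z)\<close>,
  so \<open>x\<^sub>i z - b\<close> is a cycle, hence a boundary, whose \<open>b\<close>-coefficient
  \<open>x\<^sub>i z\<^sub>b - 1\<close> lies outside \<open>(x\<^sub>1,\<dots>,x\<^sub>m)\<close>, contradicting minimality of the resolution.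
  Comparable boundary supports are then equal by minimality of supports, and the resulting
  relation \<open>a f\<^sub>n(b) = f\<^sub>n(b')\<close> gives the same contradiction with the cycle \<open>a b - b'\<close>.\<close>

lemma lookup_single_mult_add:
  fixes g :: "('a::cancel_comm_monoid_add) \<Rightarrow>\<^sub>0 ('b::comm_semiring_1)"
  shows "Poly_Mapping.lookup (Poly_Mapping.single m k * g) (m + x) = k * Poly_Mapping.lookup g x"
proof -
  have "Poly_Mapping.lookup (Poly_Mapping.single m k * g) (m + x)
     = (\<Sum>l. (k when m = l) * (\<Sum>q. Poly_Mapping.lookup g q when m + x = l + q))"
    by (simp add: lookup_mult lookup_single)
  also have "\<dots> = (\<Sum>l. (k * (\<Sum>q. Poly_Mapping.lookup g q when m + x = m + q)) when m = l)"
    by (rule Sum_any.cong) (auto simp: when_def)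
  also have "(\<Sum>q. Poly_Mapping.lookup g q when m + x = m + q) = (\<Sum>q. Poly_Mapping.lookup g q when x = q)"
    by (rule Sum_any.cong) (simp add: when_def)
  finally show ?thesis by simp
qed

lemma single_mult_left_cancel:
  fixes g h :: "('a::cancel_comm_monoid_add) \<Rightarrow>\<^sub>0 ('b::field)"
  assumes "k \<noteq> 0" "Poly_Mapping.single m k * g = Poly_Mapping.single m k * h"
  shows "g = h"
proof (rule poly_mapping_eqI)
  fix x
  have "k * Poly_Mapping.lookup g x = k * Poly_Mapping.lookup h x"
    using assms(2) by (metis lookup_single_mult_add)
  then show "Poly_Mapping.lookup g x = Poly_Mapping.lookup h x" using assms(1) by simp
qed

lemma single_eq_zero_iff [simp]: "Poly_Mapping.single x c = 0 \<longleftrightarrow> c = 0"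
  by (metis lookup_single_eq lookup_zero single_zero)

lemma lookup_Var_mult_zero: "Poly_Mapping.lookup (Var i * t) 0 = 0"
proof -
  have "Poly_Mapping.single i (1::nat) + \<rho> \<noteq> 0" for \<rho>
  proof
    assume "Poly_Mapping.single i (1::nat) + \<rho> = 0"
    then have "Poly_Mapping.lookup (Poly_Mapping.single i (1::nat) + \<rho>) i = 0" by simp
    then show False by (simp add: lookup_add)
  qed
  then have "0 \<notin> Poly_Mapping.keys (Var i * t)"
    using keys_mult[of "Var i" t] by (auto simp: Var_def)
  then show ?thesis by (simp add: in_keys_iff)
qed

lemma lookup_zero_of_var_ideal:
  "(p :: ('v::finite, 'k::comm_ring_1) mpoly) \<in> var_ideal \<Longrightarrow> Poly_Mapping.lookup p 0 = 0"
  unfolding var_ideal_def by (auto simp: lookup_sum lookup_Var_mult_zero mult.commute[of _ "Var _"])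

lemma one_notin_var_ideal: "(1 :: ('v::finite, 'k::comm_ring_1) mpoly) \<notin> var_ideal"
proof
  assume "1 \<in> (var_ideal :: ('v, 'k) mpoly set)"
  from lookup_zero_of_var_ideal[OF this] show False by (simp add: lookup_one)
qed

lemma uminus_one_notin_var_ideal: "(- 1 :: ('v::finite, 'k::comm_ring_1) mpoly) \<notin> var_ideal"
proof
  assume "- 1 \<in> (var_ideal :: ('v, 'k) mpoly set)"
  from lookup_zero_of_var_ideal[OF this] show False by (simp add: lookup_one)
qed

lemma Var_mult_diff_one_notin_var_ideal:
  "Var i * t - 1 \<notin> (var_ideal :: ('v::finite, 'k::comm_ring_1) mpoly set)"
proof
  assume "Var i * t - 1 \<in> (var_ideal :: ('v, 'k) mpoly set)"
  from lookup_zero_of_var_ideal[OF this] show False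
    by (simp add: lookup_minus lookup_one lookup_Var_mult_zero)
qed

lemma mon_deg_inj: "mon_deg \<mu> = mon_deg \<mu>' \<Longrightarrow> \<mu> = \<mu>'"
  by (rule poly_mapping_eqI) (simp add: mon_deg_def fun_eq_iff)

lemma mon_deg_add: "mon_deg (\<mu> + \<mu>') = (\<lambda>i. mon_deg \<mu> i + mon_deg \<mu>' i)"
  by (simp add: mon_deg_def lookup_add fun_eq_iff)

lemma homog_poly_single [simp]: "homog_poly (Poly_Mapping.single \<mu> k)"
  by (auto simp: homog_poly_def)

lemma homog_poly_imp_single:
  assumes "homog_poly p"
  shows "\<exists>\<mu> k. p = Poly_Mapping.single \<mu> k"
proof (cases "p = 0")
  case True then show ?thesis by (metis single_zero)
next
  case False
  then obtain \<mu> where \<mu>: "\<mu> \<in> Poly_Mapping.keys p" by (metis all_not_in_conv keys_eq_empty)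
  obtain \<alpha> where "\<forall>\<sigma>\<in>Poly_Mapping.keys p. mon_deg \<sigma> = \<alpha>"
    using assms unfolding homog_poly_def by blast
  then have "\<sigma> = \<mu>" if "\<sigma> \<in> Poly_Mapping.keys p" for \<sigma>
    using that \<mu> mon_deg_inj by metis
  then have "Poly_Mapping.keys p = {\<mu>}" using \<mu> by blast
  then have "p = Poly_Mapping.single \<mu> (Poly_Mapping.lookup p \<mu>)"
    by (intro poly_mapping_eqI) (auto simp: lookup_single when_def in_keys_iff)
  then show ?thesis by blast
qed

lemma lookup_less_of_not_exists_add:
  fixes \<mu> \<nu> :: "'a \<Rightarrow>\<^sub>0 nat"
  assumes "\<nexists>\<delta>. \<nu> = \<mu> + \<delta>"
  obtains i where "Poly_Mapping.lookup \<nu> i < Poly_Mapping.lookup \<mu> i"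
proof (rule ccontr)
  assume "\<not> thesis"
  then have "Poly_Mapping.lookup \<mu> i \<le> Poly_Mapping.lookup \<nu> i" for i
    using that not_less by blast
  then have "\<nu> = \<mu> + (\<nu> - \<mu>)"
    by (intro poly_mapping_eqI) (simp add: lookup_add lookup_minus)
  with assms show False by blast
qed

text \<open>Comparing the monomial \<open>x\<^bsup>\<nu> + \<mu>'\<^esup>\<close> of \<open>l x\<^sup>\<nu> h\<close> with the monomials of \<open>k x\<^sup>\<mu> g\<close>
  shows \<open>\<mu>'\<^sub>i \<ge> \<mu>\<^sub>i - \<nu>\<^sub>i \<ge> 1\<close>.\<close>
lemma Var_dvd_of_single_mult_eq:
  fixes g h :: "('v, 'k::field) mpoly"
  assumes eq: "Poly_Mapping.single \<nu> l * h = Poly_Mapping.single \<mu> k * g" and "l \<noteq> 0"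
    and "homog_poly h" and less: "Poly_Mapping.lookup \<nu> i < Poly_Mapping.lookup \<mu> i"
  shows "Var i dvd h"
proof -
  obtain \<mu>' k' where h: "h = Poly_Mapping.single \<mu>' k'"
    using homog_poly_imp_single[OF \<open>homog_poly h\<close>] by blast
  show ?thesis
  proof (cases "k' = 0")
    case False
    have "Poly_Mapping.lookup (Poly_Mapping.single \<nu> l * h) (\<nu> + \<mu>') \<noteq> 0"
      using False \<open>l \<noteq> 0\<close> by (simp add: lookup_single_mult_add h)
    then obtain \<rho> where "\<nu> + \<mu>' = \<mu> + \<rho>"
      using eq keys_mult[of "Poly_Mapping.single \<mu> k" g] by (auto simp: in_keys_iff split: if_splits)
    from arg_cong[OF this, of "\<lambda>\<sigma>. Poly_Mapping.lookup \<sigma> i"] less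
    have "1 \<le> Poly_Mapping.lookup \<mu>' i" by (simp add: lookup_add)
    then have "\<mu>' = Poly_Mapping.single i 1 + (\<mu>' - Poly_Mapping.single i 1)"
      by (intro poly_mapping_eqI) (auto simp: lookup_add lookup_minus lookup_single when_def)
    then have "h = Var i * Poly_Mapping.single (\<mu>' - Poly_Mapping.single i 1) k'"
      by (metis h Var_def mult_single mult_1)
    then show ?thesis by simp
  qed (simp add: h)
qed

lemma lookup_vsmult [simp]: "Poly_Mapping.lookup (vsmult a y) c = a * Poly_Mapping.lookup y c"
  by (simp add: vsmult_def Poly_Mapping.map.rep_eq when_def)

lemma keys_vsmult: "Poly_Mapping.keys (vsmult a y) \<subseteq> Poly_Mapping.keys y"
  by (auto simp: in_keys_iff)

lemma vsmult_zero [simp]: "vsmult a 0 = 0"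
  by (rule poly_mapping_eqI) simp

lemma vsmult_vsmult: "vsmult a (vsmult r y) = vsmult (a * r) y"
  by (rule poly_mapping_eqI) (simp add: mult.assoc)

lemma vsmult_single_left_cancel:
  fixes u v :: "'b \<Rightarrow>\<^sub>0 ('v, 'k::field) mpoly"
  assumes "k \<noteq> 0" "vsmult (Poly_Mapping.single \<mu> k) u = vsmult (Poly_Mapping.single \<mu> k) v"
  shows "u = v"
proof (rule poly_mapping_eqI)
  fix c
  from assms(2) have "Poly_Mapping.single \<mu> k * Poly_Mapping.lookup u c
      = Poly_Mapping.single \<mu> k * Poly_Mapping.lookup v c"
    by (metis lookup_vsmult)
  then show "Poly_Mapping.lookup u c = Poly_Mapping.lookup v c"
    using single_mult_left_cancel[OF assms(1)] by blast
qed

lemma vsmult_factor: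
  assumes "\<forall>c. a dvd Poly_Mapping.lookup v c"
  obtains w where "vsmult a w = v" "Poly_Mapping.keys w \<subseteq> Poly_Mapping.keys v"
proof
  define w where "w = Poly_Mapping.map (\<lambda>r. SOME s. r = a * s) v"
  have lookup_w: "Poly_Mapping.lookup w c =
      ((SOME s. Poly_Mapping.lookup v c = a * s) when Poly_Mapping.lookup v c \<noteq> 0)" for c
    by (simp add: w_def Poly_Mapping.map.rep_eq)
  show "Poly_Mapping.keys w \<subseteq> Poly_Mapping.keys v" by (auto simp: in_keys_iff lookup_w)
  show "vsmult a w = v"
  proof (rule poly_mapping_eqI)
    fix c
    have "Poly_Mapping.lookup v c = a * (SOME s. Poly_Mapping.lookup v c = a * s)"
      using someI_ex[of "\<lambda>s. Poly_Mapping.lookup v c = a * s"] assms by (auto elim: dvdE)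
    then show "Poly_Mapping.lookup (vsmult a w) c = Poly_Mapping.lookup v c"
      by (cases "Poly_Mapping.lookup v c = 0") (simp_all add: lookup_w)
  qed
qed

lemma dmap_lookup:
  assumes "finite K" "Poly_Mapping.keys y \<subseteq> K"
  shows "Poly_Mapping.lookup (dmap d n y) c
    = (\<Sum>b\<in>K. Poly_Mapping.lookup y b * Poly_Mapping.lookup (d n b) c)"
proof -
  have "Poly_Mapping.lookup (dmap d n y) c
      = (\<Sum>b\<in>Poly_Mapping.keys y. Poly_Mapping.lookup y b * Poly_Mapping.lookup (d n b) c)"
    by (simp add: dmap_def lookup_sum)
  also have "\<dots> = (\<Sum>b\<in>K. Poly_Mapping.lookup y b * Poly_Mapping.lookup (d n b) c)"
    by (rule sum.mono_neutral_left) (use assms in \<open>auto simp: in_keys_iff\<close>)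
  finally show ?thesis .
qed

lemma dmap_diff: "dmap d n (u - v) = dmap d n u - dmap d n v"
proof (rule poly_mapping_eqI)
  fix c
  let ?K = "Poly_Mapping.keys u \<union> Poly_Mapping.keys v"
  have "Poly_Mapping.keys (u - v) \<subseteq> ?K" by (rule keys_diff)
  then show "Poly_Mapping.lookup (dmap d n (u - v)) c = Poly_Mapping.lookup (dmap d n u - dmap d n v) c"
    by (simp add: dmap_lookup[of ?K] lookup_minus sum_subtractf algebra_simps)
qed

lemma dmap_vsmult: "dmap d n (vsmult a u) = vsmult a (dmap d n u)"
proof (rule poly_mapping_eqI)
  fix c
  have "Poly_Mapping.keys (vsmult a u) \<subseteq> Poly_Mapping.keys u" by (rule keys_vsmult)
  then show "Poly_Mapping.lookup (dmap d n (vsmult a u)) c = Poly_Mapping.lookup (vsmult a (dmap d n u)) c"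
    by (simp add: dmap_lookup[of "Poly_Mapping.keys u"] sum_distrib_left mult.assoc)
qed

lemma dmap_single_one: "dmap d n (Poly_Mapping.single b 1) = d n b"
  by (rule poly_mapping_eqI) (simp add: dmap_lookup[of "{b}"])

lemma single_in_free_mod_iff [simp]:
  "Poly_Mapping.single b (1 :: ('v, 'k::comm_ring_1) mpoly) \<in> free_mod B n \<longleftrightarrow> b \<in> B n"
  by (simp add: free_mod_def)

lemma free_mod_diff: "u \<in> free_mod B k \<Longrightarrow> v \<in> free_mod B k \<Longrightarrow> u - v \<in> free_mod B k"
  unfolding free_mod_def using keys_diff[of u v] by blast

lemma free_mod_vsmult: "u \<in> free_mod B k \<Longrightarrow> vsmult a u \<in> free_mod B k"
  unfolding free_mod_def using keys_vsmult[of a u] by blast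

lemma ker_f_diff:
  assumes "u \<in> ker_f B d k" "v \<in> ker_f B d k"
  shows "u - v \<in> ker_f B d k"
proof (cases "k = 0")
  case True
  with assms obtain u' v' where "u' \<in> free_mod B 1" "v' \<in> free_mod B 1"
    "u = dmap d 1 u'" "v = dmap d 1 v'"
    by (auto simp: ker_f_def)
  with True show ?thesis
    by (auto simp: ker_f_def dmap_diff intro!: image_eqI[of _ _ "u' - v'"] free_mod_diff)
qed (use assms in \<open>auto simp: ker_f_def dmap_diff free_mod_diff\<close>)

lemma ker_f_vsmult:
  assumes "u \<in> ker_f B d k"
  shows "vsmult a u \<in> ker_f B d k"
proof (cases "k = 0")
  case True
  with assms obtain u' where "u' \<in> free_mod B 1" "u = dmap d 1 u'"
    by (auto simp: ker_f_def)
  with True show ?thesis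
    by (auto simp: ker_f_def dmap_vsmult intro!: image_eqI[of _ _ "vsmult a u'"] free_mod_vsmult)
next
  case False
  with assms show ?thesis by (auto simp: ker_f_def dmap_vsmult free_mod_vsmult)
qed

text \<open>Minimality of the support of \<open>u\<close> forces the cycle \<open>u\<^sub>c v - v\<^sub>c u\<close>, whose support
  misses \<open>c\<close>, to vanish.\<close>
lemma cycle_min_supp_proportional:
  assumes u: "cycle_min_supp B d k u" and v: "v \<in> ker_f B d k"
    and sub: "Poly_Mapping.keys v \<subseteq> Poly_Mapping.keys u" and c: "c \<in> Poly_Mapping.keys u"
  shows "vsmult (Poly_Mapping.lookup u c) v = vsmult (Poly_Mapping.lookup v c) u"
proof -
  define z where "z = vsmult (Poly_Mapping.lookup u c) v - vsmult (Poly_Mapping.lookup v c) u"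
  have "z \<in> ker_f B d k"
    using u v unfolding z_def cycle_min_supp_def by (intro ker_f_diff ker_f_vsmult) auto
  moreover have "Poly_Mapping.keys z \<subseteq> Poly_Mapping.keys u - {c}"
  proof
    fix x assume "x \<in> Poly_Mapping.keys z"
    then have ne: "Poly_Mapping.lookup u c * Poly_Mapping.lookup v x
        \<noteq> Poly_Mapping.lookup v c * Poly_Mapping.lookup u x"
      by (simp add: z_def in_keys_iff lookup_minus)
    then have "x \<in> Poly_Mapping.keys v \<or> x \<in> Poly_Mapping.keys u" by (auto simp: in_keys_iff)
    moreover have "x \<noteq> c" using ne by (auto simp: mult.commute)
    ultimately show "x \<in> Poly_Mapping.keys u - {c}" using sub by blast
  qed
  ultimately have "z = 0" using u c unfolding cycle_min_supp_def by blast
  then show ?thesis by (simp add: z_def)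
qed

lemma homog_poly_lookup_of_homog_vec_deg:
  "homog_vec_deg dg \<alpha> v \<Longrightarrow> homog_poly (Poly_Mapping.lookup v c)"
  unfolding homog_vec_deg_def homog_poly_def
  by (rule exI[of _ "\<lambda>i. \<alpha> i - dg c i"]) force

context
  fixes B :: "nat \<Rightarrow> 'b set"
    and dg :: "nat \<Rightarrow> 'b \<Rightarrow> ('v::finite \<Rightarrow> int)"
    and d :: "nat \<Rightarrow> 'b \<Rightarrow> ('b \<Rightarrow>\<^sub>0 ('v, 'k::field) mpoly)"
  assumes res: "min_graded_free_res B dg d"
begin

lemma boundary_in_free_mod: "n \<ge> 1 \<Longrightarrow> b \<in> B n \<Longrightarrow> d n b \<in> free_mod B (n - 1)"
  using res by (simp add: min_graded_free_res_def)

lemma homog_boundary: "n \<ge> 1 \<Longrightarrow> b \<in> B n \<Longrightarrow> homog_vec_deg (dg (n - 1)) (dg n b) (d n b)"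
  using res by (simp add: min_graded_free_res_def)

lemma ker_f_eq_image: "n \<ge> 1 \<Longrightarrow> ker_f B d n = dmap d (n + 1) ` free_mod B (n + 1)"
  using res by (simp add: min_graded_free_res_def)

lemma lookup_ker_f_var_ideal:
  assumes "n \<ge> 1" "u \<in> ker_f B d n"
  shows "Poly_Mapping.lookup u c \<in> var_ideal"
  using assms res ker_f_eq_image[OF assms(1)] by (auto simp: min_graded_free_res_def)

lemma ker_f_pred_eq_image: "n \<ge> 1 \<Longrightarrow> ker_f B d (n - 1) = dmap d n ` free_mod B n"
  using ker_f_eq_image[of "n - 1"] by (cases "n = 1") (simp_all add: ker_f_def)

lemma boundary_in_ker_f:
  assumes "n \<ge> 1" "b \<in> B n"
  shows "d n b \<in> ker_f B d (n - 1)"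
proof -
  have "dmap d n (Poly_Mapping.single b 1) \<in> dmap d n ` free_mod B n" using assms(2) by simp
  then show ?thesis using ker_f_pred_eq_image[OF assms(1)] by (simp add: dmap_single_one)
qed

lemma homog_poly_lookup_dmap:
  assumes n: "n \<ge> 1" and y: "y \<in> free_mod B n" and "homog_vec (dg n) y"
  shows "homog_poly (Poly_Mapping.lookup (dmap d n y) c)"
proof -
  obtain \<alpha> where h\<alpha>: "homog_vec_deg (dg n) \<alpha> y" using assms(3) by (auto simp: homog_vec_def)
  have "mon_deg \<mu> = (\<lambda>i. \<alpha> i - dg (n - 1) c i)"
    if \<mu>: "\<mu> \<in> Poly_Mapping.keys (Poly_Mapping.lookup (dmap d n y) c)" for \<mu>
  proof -
    have "Poly_Mapping.lookup (dmap d n y) c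
        = (\<Sum>b\<in>Poly_Mapping.keys y. Poly_Mapping.lookup y b * Poly_Mapping.lookup (d n b) c)"
      by (simp add: dmap_def lookup_sum)
    with \<mu> obtain b where b: "b \<in> Poly_Mapping.keys y"
      and "\<mu> \<in> Poly_Mapping.keys (Poly_Mapping.lookup y b * Poly_Mapping.lookup (d n b) c)"
      using keys_sum by fastforce
    then obtain \<mu>1 \<mu>2 where \<mu>12: "\<mu> = \<mu>1 + \<mu>2" "\<mu>1 \<in> Poly_Mapping.keys (Poly_Mapping.lookup y b)"
      "\<mu>2 \<in> Poly_Mapping.keys (Poly_Mapping.lookup (d n b) c)"
      using keys_mult by blast
    have "b \<in> B n" using b y by (auto simp: free_mod_def)
    then have deg2: "(\<lambda>i. mon_deg \<mu>2 i + dg (n - 1) c i) = dg n b"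
      using homog_boundary[OF n] \<mu>12(3) by (auto simp: homog_vec_deg_def)
    have deg1: "(\<lambda>i. mon_deg \<mu>1 i + dg n b i) = \<alpha>"
      using h\<alpha> \<mu>12(2) by (auto simp: homog_vec_deg_def)
    show ?thesis
    proof
      fix i
      from fun_cong[OF deg1, of i] fun_cong[OF deg2, of i]
      show "mon_deg \<mu> i = \<alpha> i - dg (n - 1) c i" by (simp add: \<mu>12(1) mon_deg_add)
    qed
  qed
  then show ?thesis unfolding homog_poly_def by blast
qed

lemma boundary_ne_zero:
  assumes "n \<ge> 1" "b \<in> B n"
  shows "d n b \<noteq> 0"
proof
  assume "d n b = 0"
  then have "Poly_Mapping.single b 1 \<in> ker_f B d n"
    using assms by (simp add: ker_f_def dmap_single_one)
  from lookup_ker_f_var_ideal[OF assms(1) this, of b] show False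
    using one_notin_var_ideal by (metis lookup_single_eq)
qed

lemma boundary_ne_vsmult_Var:
  assumes tf: "coker_torsion_free B d" and n: "n \<ge> 1" and b: "b \<in> B n"
    and w: "w \<in> free_mod B (n - 1)"
  shows "vsmult (Var i) w \<noteq> d n b"
proof
  assume fw: "vsmult (Var i) w = d n b"
  have Var_ne_zero: "Var i \<noteq> (0 :: ('v, 'k) mpoly)" by (simp add: Var_def)
  have "w \<in> ker_f B d (n - 1)"
  proof (cases "n = 1")
    case True
    then show ?thesis
      using tf Var_ne_zero w fw boundary_in_ker_f[OF n b] unfolding coker_torsion_free_def by auto
  next
    case False
    then have "dmap d (n - 1) (d n b) = 0"
      using n boundary_in_ker_f[OF n b] by (simp add: ker_f_def)
    then have "vsmult (Var i) (dmap d (n - 1) w) = vsmult (Var i) 0"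
      by (simp add: fw [symmetric] dmap_vsmult)
    then have "dmap d (n - 1) w = 0"
      unfolding Var_def by (rule vsmult_single_left_cancel[rotated]) simp
    then show ?thesis using False n w by (simp add: ker_f_def)
  qed
  then obtain z where z: "z \<in> free_mod B n" "w = dmap d n z"
    using ker_f_pred_eq_image[OF n] by auto
  let ?u = "vsmult (Var i) z - Poly_Mapping.single b 1"
  have "?u \<in> ker_f B d n"
    using n z fw b
    by (simp add: ker_f_def dmap_diff dmap_vsmult dmap_single_one free_mod_diff free_mod_vsmult)
  from lookup_ker_f_var_ideal[OF n this, of b]
  have "Var i * Poly_Mapping.lookup z b - 1 \<in> (var_ideal :: ('v, 'k) mpoly set)"
    by (simp add: lookup_minus)
  then show False by (metis Var_mult_diff_one_notin_var_ideal)
qed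

lemma not_Var_dvd_boundary_coeffs:
  assumes tf: "coker_torsion_free B d" and n: "n \<ge> 1" and b: "b \<in> B n"
  shows "\<not> (\<forall>c. Var i dvd Poly_Mapping.lookup (d n b) c)"
proof
  assume "\<forall>c. Var i dvd Poly_Mapping.lookup (d n b) c"
  then obtain w where w: "vsmult (Var i) w = d n b"
    and "Poly_Mapping.keys w \<subseteq> Poly_Mapping.keys (d n b)"
    by (rule vsmult_factor)
  then have "w \<in> free_mod B (n - 1)"
    using boundary_in_free_mod[OF n b] by (auto simp: free_mod_def)
  from boundary_ne_vsmult_Var[OF tf n b this] w show False by contradiction
qed

lemma boundary_proportional_of_keys_eq:
  assumes tf: "coker_torsion_free B d" and ms: "basis_min_supp B d"
    and n: "n \<ge> 1" and y: "y \<in> free_mod B n" and b: "b \<in> B n" and hy: "homog_vec (dg n) y"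
    and keys_eq: "Poly_Mapping.keys (dmap d n y) = Poly_Mapping.keys (d n b)"
  shows "\<exists>a. a \<noteq> 0 \<and> homog_poly a \<and> vsmult a (d n b) = dmap d n y"
proof -
  obtain c where c: "c \<in> Poly_Mapping.keys (d n b)"
    using boundary_ne_zero[OF n b] by (metis all_not_in_conv keys_eq_empty)
  have hb: "homog_poly (Poly_Mapping.lookup (d n b) x)" for x
    by (rule homog_poly_lookup_of_homog_vec_deg[OF homog_boundary[OF n b]])
  obtain \<mu> k where p: "Poly_Mapping.lookup (d n b) c = Poly_Mapping.single \<mu> k"
    using homog_poly_imp_single[OF hb] by blast
  obtain \<nu> l where q: "Poly_Mapping.lookup (dmap d n y) c = Poly_Mapping.single \<nu> l"
    using homog_poly_imp_single[OF homog_poly_lookup_dmap[OF n y hy]] by blast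
  have "k \<noteq> 0" "l \<noteq> 0" using c keys_eq p q by (auto simp: in_keys_iff)
  have "cycle_min_supp B d (n - 1) (d n b)" using ms n b by (simp add: basis_min_supp_def)
  from cycle_min_supp_proportional[OF this _ _ c] keys_eq
  have rel: "vsmult (Poly_Mapping.single \<mu> k) (dmap d n y) = vsmult (Poly_Mapping.single \<nu> l) (d n b)"
    using p q ker_f_pred_eq_image[OF n] y by auto
  show ?thesis
  proof (cases "\<exists>\<delta>. \<nu> = \<mu> + \<delta>")
    case True
    then obtain \<delta> where \<delta>: "\<nu> = \<mu> + \<delta>" by blast
    define a where "a = Poly_Mapping.single \<delta> (l / k)"
    have "vsmult (Poly_Mapping.single \<mu> k) (vsmult a (d n b))
        = vsmult (Poly_Mapping.single \<mu> k) (dmap d n y)"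
      using rel \<open>k \<noteq> 0\<close> by (simp add: vsmult_vsmult a_def mult_single \<delta>)
    then have "vsmult a (d n b) = dmap d n y" by (rule vsmult_single_left_cancel[OF \<open>k \<noteq> 0\<close>])
    moreover have "a \<noteq> 0" using \<open>k \<noteq> 0\<close> \<open>l \<noteq> 0\<close> by (simp add: a_def)
    ultimately show ?thesis by (intro exI[of _ a]) (simp add: a_def)
  next
    case False
    then obtain i where i: "Poly_Mapping.lookup \<nu> i < Poly_Mapping.lookup \<mu> i"
      by (rule lookup_less_of_not_exists_add)
    have "Var i dvd Poly_Mapping.lookup (d n b) x" for x
    proof (rule Var_dvd_of_single_mult_eq[OF _ \<open>l \<noteq> 0\<close> hb i])
      from arg_cong[OF rel, of "\<lambda>v. Poly_Mapping.lookup v x"]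
      show "Poly_Mapping.single \<nu> l * Poly_Mapping.lookup (d n b) x
          = Poly_Mapping.single \<mu> k * Poly_Mapping.lookup (dmap d n y) x" by simp
    qed
    with not_Var_dvd_boundary_coeffs[OF tf n b] show ?thesis by blast
  qed
qed

lemma boundary_keys_not_subset:
  assumes tf: "coker_torsion_free B d" and ms: "basis_min_supp B d"
    and n: "n \<ge> 1" and b: "b \<in> B n" and b': "b' \<in> B n" and "b \<noteq> b'"
  shows "\<not> Poly_Mapping.keys (d n b) \<subseteq> Poly_Mapping.keys (d n b')"
proof
  assume sub: "Poly_Mapping.keys (d n b) \<subseteq> Poly_Mapping.keys (d n b')"
  have "cycle_min_supp B d (n - 1) (d n b')" using ms n b' by (simp add: basis_min_supp_def)
  then have "Poly_Mapping.keys (d n b') = Poly_Mapping.keys (d n b)"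
    using sub boundary_in_ker_f[OF n b] boundary_ne_zero[OF n b]
    unfolding cycle_min_supp_def by blast
  moreover have "homog_vec (dg n) (Poly_Mapping.single b' 1 :: 'b \<Rightarrow>\<^sub>0 ('v, 'k) mpoly)"
    unfolding homog_vec_def homog_vec_deg_def
    by (rule exI[of _ "dg n b'"]) (auto simp: lookup_single when_def mon_deg_def)
  ultimately obtain a where a: "vsmult a (d n b) = d n b'"
    using boundary_proportional_of_keys_eq[OF tf ms n _ b, of "Poly_Mapping.single b' 1"] b'
    by (auto simp: dmap_single_one)
  let ?u = "vsmult a (Poly_Mapping.single b 1) - Poly_Mapping.single b' 1"
  have "?u \<in> ker_f B d n"
    using n a b b'
    by (simp add: ker_f_def dmap_diff dmap_vsmult dmap_single_one free_mod_diff free_mod_vsmult)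
  from lookup_ker_f_var_ideal[OF n this, of b'] \<open>b \<noteq> b'\<close>
  have "- 1 \<in> (var_ideal :: ('v, 'k) mpoly set)" by (simp add: lookup_minus lookup_single)
  then show False by (metis uminus_one_notin_var_ideal)
qed

end

theorem mainTheorem5:
  fixes B :: "nat \<Rightarrow> 'b set"
    and dg :: "nat \<Rightarrow> 'b \<Rightarrow> ('v::finite \<Rightarrow> int)"
    and d :: "nat \<Rightarrow> 'b \<Rightarrow> ('b \<Rightarrow>\<^sub>0 ('v, 'k::field) mpoly)"
  assumes res: "min_graded_free_res B dg d"
    and fg: "coker_fin_gen B d"
    and tf: "coker_torsion_free B d"
    and ms: "basis_min_supp B d"
  shows "(\<forall>n\<ge>1. \<forall>y\<in>free_mod B n. \<forall>b\<in>B n.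
            homog_vec (dg n) y \<longrightarrow> Poly_Mapping.keys (dmap d n y) = Poly_Mapping.keys (d n b) \<longrightarrow>
            (\<exists>a. a \<noteq> 0 \<and> homog_poly a \<and> vsmult a (d n b) = dmap d n y))
       \<and> (\<forall>n\<ge>1. \<forall>b\<in>B n. \<forall>b'\<in>B n. b \<noteq> b' \<longrightarrow> \<not> Poly_Mapping.keys (d n b) \<subseteq> Poly_Mapping.keys (d n b'))"
  using boundary_proportional_of_keys_eq[OF res tf ms] boundary_keys_not_subset[OF res tf ms]
  by (intro conjI allI impI ballI) simp_all

end
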